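(* Let $(X,\rho)$ be a metric space, $(A_k)\subset CL(X)$ and $A\in CL(X)$. Then the following statements are equivalent: (i) $(A_k)$ is Wijsman convergent to $A$; (ii) $(A_k)$ is $f$-Wijsman statistically convergent to $A$ for every unbounded modulus $f$; (iii) $(A_k)$ is $f$-Wijsman statistically convergent to $A$ for every unbounded, concave and slowly varying modulus $f$.
   Context: A modulus is a function $f\colon[0,\infty)\to[0,\infty)$ such that $f(x)=0$ iff $x=0$, $f$ is subadditive, increasing and continuous. A modulus $f$ is slowly varying if $\lim_{x\to\infty}\frac{f(ax)}{f(x)}=1$ for every $a>0$. $CL(X)$ denotes the set of all non-empty closed subsets of $(X,\rho)$, and $d(x,B)=\inf_{y\in B}\rho(x,y)$. $(A_k)$ is Wijsman convergent to $A$ if $d(x,A_k)\to d(x,A)$ for every $x\in X$. For an unbounded modulus $f$ and $K\subseteq\mathbb N$, the $f$-density is $d^f(K)=\lim_{n\to\infty}\frac{f(|\{k\le n:k\in K\}|)}{f(n)}$ (when the limit exists). A real sequence $(x_k)$ is $f$-statistically convergent to $l$ if for every $\varepsilon>0$ the set $\{k:|x_k-l|\ge\varepsilon\}$ has $f$-density $0$. $(A_k)$ is $f$-Wijsman statistically convergent to $A$ if for every $x\in X$ the sequence $(d(x,A_k))$ is $f$-statistically convergent to $d(x,A)$. *)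

theory Defs
  imports "HOL-Analysis.Analysis"
begin

definition modulus :: "(real \<Rightarrow> real) \<Rightarrow> bool" where
  "modulus f \<longleftrightarrow>
     (\<forall>x\<ge>0. f x \<ge> 0) \<and>
     (\<forall>x\<ge>0. f x = 0 \<longleftrightarrow> x = 0) \<and>
     (\<forall>x\<ge>0. \<forall>y\<ge>0. f (x + y) \<le> f x + f y) \<and>
     mono_on {0..} f \<and>
     continuous_on {0..} f"

definition unbounded_modulus :: "(real \<Rightarrow> real) \<Rightarrow> bool" where
  "unbounded_modulus f \<longleftrightarrow> modulus f \<and> (\<forall>M. \<exists>x\<ge>0. f x > M)"

definition slowly_varying :: "(real \<Rightarrow> real) \<Rightarrow> bool" where
  "slowly_varying f \<longleftrightarrow> (\<forall>a>0. ((\<lambda>x. f (a * x) / f x) \<longlongrightarrow> 1) at_top)"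

definition f_density_zero :: "(real \<Rightarrow> real) \<Rightarrow> nat set \<Rightarrow> bool" where
  "f_density_zero f K \<longleftrightarrow>
     ((\<lambda>n. f (real (card {k \<in> {1..n}. k \<in> K})) / f (real n)) \<longlonglongrightarrow> 0)"

definition f_stat_conv :: "(real \<Rightarrow> real) \<Rightarrow> (nat \<Rightarrow> real) \<Rightarrow> real \<Rightarrow> bool" where
  "f_stat_conv f x l \<longleftrightarrow> (\<forall>\<epsilon>>0. f_density_zero f {k. \<bar>x k - l\<bar> \<ge> \<epsilon>})"

definition CL :: "'a::metric_space set set" where
  "CL = {B. B \<noteq> {} \<and> closed B}"

definition wijsman_conv :: "(nat \<Rightarrow> 'a::metric_space set) \<Rightarrow> 'a set \<Rightarrow> bool" where
  "wijsman_conv As A \<longleftrightarrow> (\<forall>x. (\<lambda>k. infdist x (As k)) \<longlonglongrightarrow> infdist x A)"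

definition f_wijsman_stat_conv ::
  "(real \<Rightarrow> real) \<Rightarrow> (nat \<Rightarrow> 'a::metric_space set) \<Rightarrow> 'a set \<Rightarrow> bool" where
  "f_wijsman_stat_conv f As A \<longleftrightarrow> (\<forall>x. f_stat_conv f (\<lambda>k. infdist x (As k)) (infdist x A))"

end

theory Submission
  imports Defs
begin

text \<open>Wijsman convergence makes every exceptional set of indices
  {k. e <= |d(x, A k) - d(x, A)|} finite, and finite sets have f-density zero for every
  unbounded modulus f. Conversely, if Wijsman convergence fails, some exceptional set K is
  infinite, and we build an unbounded, concave, slowly varying modulus for which K does not
  have f-density zero: f(x) = sum_i min(x / T i, 1) with T (i + 1) >= 2 T i. Then
  f(T m) >= m + 1 while f(x) <= m + 3 for x < T (m + 1), and |f(a x) - f(x)| stays bounded,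
  so f is slowly varying. Choosing each T (m + 1) beyond an n for which K already has T m
  elements in {1..n} keeps the ratio f(|K \<inter> {1..n}|) / f(n) above 1/3 infinitely often.\<close>

lemma unbounded_modulus_tendsto_at_top:
  assumes "unbounded_modulus f"
  shows "filterlim f at_top at_top"
  unfolding filterlim_at_top eventually_at_top_linorder
proof
  fix M
  obtain x where x: "0 \<le> x" "M < f x"
    using assms unfolding unbounded_modulus_def by auto
  have "mono_on {0..} f"
    using assms unfolding unbounded_modulus_def modulus_def by auto
  then have "\<forall>y\<ge>x. M \<le> f y"
    using x by (smt (verit) atLeast_iff mono_onD)
  then show "\<exists>x. \<forall>y\<ge>x. M \<le> f y" ..
qed

lemma f_density_zero_finite:
  assumes f: "unbounded_modulus f" and K: "finite K"
  shows "f_density_zero f K"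
  unfolding f_density_zero_def
proof (rule Lim_null_comparison)
  have mono: "mono_on {0..} f" and nonneg: "\<And>x. 0 \<le> x \<Longrightarrow> 0 \<le> f x"
    using f unfolding unbounded_modulus_def modulus_def by auto
  have "filterlim (\<lambda>n. f (real n)) at_top sequentially"
    using unbounded_modulus_tendsto_at_top[OF f] filterlim_real_sequentially
    by (rule filterlim_compose)
  then show "(\<lambda>n. f (real (card K)) / f (real n)) \<longlonglongrightarrow> 0"
    by (rule tendsto_divide_0[OF tendsto_const filterlim_at_top_imp_at_infinity])
  have "f (real (card {k \<in> {1..n}. k \<in> K})) \<le> f (real (card K))" for n
    using K by (intro mono_onD[OF mono]) (auto intro: card_mono)
  then show "\<forall>\<^sub>F n in sequentially. norm (f (real (card {k \<in> {1..n}. k \<in> K})) / f (real n))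
               \<le> f (real (card K)) / f (real n)"
    by (intro always_eventually allI) (simp add: nonneg divide_right_mono)
qed

lemma wijsman_conv_imp_f_wijsman_stat_conv:
  assumes "wijsman_conv As A" and "unbounded_modulus f"
  shows "f_wijsman_stat_conv f As A"
  unfolding f_wijsman_stat_conv_def f_stat_conv_def
proof (intro allI impI)
  fix x and e :: real
  assume "0 < e"
  moreover have "(\<lambda>k. infdist x (As k)) \<longlonglongrightarrow> infdist x A"
    using assms(1) unfolding wijsman_conv_def by blast
  ultimately obtain N where "\<And>k. N \<le> k \<Longrightarrow> \<bar>infdist x (As k) - infdist x A\<bar> < e"
    by (metis LIMSEQ_D real_norm_def)
  then have "{k. e \<le> \<bar>infdist x (As k) - infdist x A\<bar>} \<subseteq> {..<N}"
    by (force simp flip: not_le)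
  then show "f_density_zero f {k. e \<le> \<bar>infdist x (As k) - infdist x A\<bar>}"
    by (intro f_density_zero_finite[OF assms(2)]) (auto intro: finite_subset)
qed

lemma slowly_varying_if_bounded_difference:
  assumes lim: "filterlim f at_top at_top"
    and bounded: "\<And>a. 0 < a \<Longrightarrow> \<exists>C. \<forall>x\<ge>0. \<bar>f (a * x) - f x\<bar> \<le> C"
  shows "slowly_varying f"
  unfolding slowly_varying_def
proof (intro allI impI)
  fix a :: real
  assume "0 < a"
  then obtain C where C: "\<And>x. 0 \<le> x \<Longrightarrow> \<bar>f (a * x) - f x\<bar> \<le> C"
    using bounded by blast
  have pos: "\<forall>\<^sub>F x in at_top. 0 \<le> x \<and> 0 < f x"
    using lim by (intro eventually_conj eventually_ge_at_top) (simp add: filterlim_at_top_dense)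
  have "((\<lambda>x. (f (a * x) - f x) / f x) \<longlongrightarrow> 0) at_top"
  proof (rule Lim_null_comparison)
    show "((\<lambda>x. C / f x) \<longlongrightarrow> 0) at_top"
      using lim by (rule tendsto_divide_0[OF tendsto_const filterlim_at_top_imp_at_infinity])
    show "\<forall>\<^sub>F x in at_top. norm ((f (a * x) - f x) / f x) \<le> C / f x"
      using pos by eventually_elim (simp add: C abs_divide divide_right_mono)
  qed
  then have "((\<lambda>x. 1 + (f (a * x) - f x) / f x) \<longlongrightarrow> 1) at_top"
    using tendsto_add[OF tendsto_const, of _ 0 at_top 1] by simp
  moreover have "\<forall>\<^sub>F x in at_top. 1 + (f (a * x) - f x) / f x = f (a * x) / f x"
    using pos by eventually_elim (simp add: field_simps)
  ultimately show "((\<lambda>x. f (a * x) / f x) \<longlongrightarrow> 1) at_top"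
    by (rule Lim_transform_eventually)
qed

lemma card_counting_le: "card {k \<in> {1..n}. k \<in> K} \<le> n"
proof -
  have "card {k \<in> {1..n}. k \<in> K} \<le> card {1..n}"
    by (rule card_mono) auto
  then show ?thesis
    by simp
qed

lemma summable_geometric_half: "summable (\<lambda>i. c * (1/2 :: real) ^ i)"
  by (intro summable_mult summable_geometric) auto

definition ramp_sum :: "(nat \<Rightarrow> real) \<Rightarrow> real \<Rightarrow> real" where
  "ramp_sum T x = (\<Sum>i. min (x / T i) 1)"

definition ramp_tail :: "(nat \<Rightarrow> real) \<Rightarrow> real \<Rightarrow> nat \<Rightarrow> real" where
  "ramp_tail T x i = (if x < T i then x / T i else 0)"

locale doubling_scale =
  fixes T :: "nat \<Rightarrow> real"
  assumes T_0: "1 \<le> T 0" and T_Suc: "\<And>i. 2 * T i \<le> T (Suc i)"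
begin

lemma two_power_le_T: "2 ^ i \<le> T i"
proof (induction i)
  case (Suc i)
  then show ?case
    using T_Suc[of i] by simp
qed (simp add: T_0)

lemma T_pos: "0 < T i"
  using two_power_le_T[of i] zero_less_power[of "2 :: real" i] by linarith

lemma T_mono: "i \<le> j \<Longrightarrow> T i \<le> T j"
proof (rule lift_Suc_mono_le[of T])
  show "T n \<le> T (Suc n)" for n
    using T_Suc[of n] T_pos[of n] by linarith
qed

lemma ramp_diff_le: "\<bar>min (x / T i) 1 - min (y / T i) 1\<bar> \<le> \<bar>x - y\<bar> * (1/2) ^ i"
proof -
  have "\<bar>min (x / T i) 1 - min (y / T i) 1\<bar> \<le> \<bar>x / T i - y / T i\<bar>"
    by (auto simp: min_def abs_if)
  also have "\<dots> = \<bar>x - y\<bar> / T i"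
    using T_pos[of i] by (simp add: diff_divide_distrib[symmetric])
  also have "\<dots> \<le> \<bar>x - y\<bar> / 2 ^ i"
    using T_pos[of i] two_power_le_T[of i] by (intro divide_left_mono) auto
  finally show ?thesis
    by (simp add: power_one_over)
qed

lemma summable_ramp: "summable (\<lambda>i. min (x / T i) 1)"
  using ramp_diff_le[of x _ 0]
  by (intro summable_comparison_test[OF _ summable_geometric_half]) auto

lemma ramp_sum_lipschitz: "\<bar>ramp_sum T x - ramp_sum T y\<bar> \<le> 2 * \<bar>x - y\<bar>"
proof -
  have "ramp_sum T x - ramp_sum T y = (\<Sum>i. min (x / T i) 1 - min (y / T i) 1)"
    unfolding ramp_sum_def by (rule suminf_diff[OF summable_ramp summable_ramp])
  also have "\<bar>\<dots>\<bar> \<le> (\<Sum>i. \<bar>x - y\<bar> * (1/2) ^ i)"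
    using norm_suminf_le[of "\<lambda>i. min (x / T i) 1 - min (y / T i) 1"] ramp_diff_le
      summable_geometric_half by simp
  also have "\<dots> = 2 * \<bar>x - y\<bar>"
    by (simp add: suminf_mult suminf_geometric)
  finally show ?thesis .
qed

lemma ramp_sum_0: "ramp_sum T 0 = 0"
  by (simp add: ramp_sum_def)

lemma ramp_sum_pos: "0 < x \<Longrightarrow> 0 < ramp_sum T x"
  unfolding ramp_sum_def
  by (rule suminf_pos2[OF summable_ramp, of _ 0]) (use T_pos in \<open>auto simp: min_def\<close>)

lemma ramp_sum_mono: "0 \<le> x \<Longrightarrow> x \<le> y \<Longrightarrow> ramp_sum T x \<le> ramp_sum T y"
  unfolding ramp_sum_def
  by (rule suminf_le[OF _ summable_ramp summable_ramp])
     (use T_pos in \<open>auto simp: min_def divide_right_mono\<close>)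

lemma ramp_sum_subadditive:
  assumes "0 \<le> x" "0 \<le> y"
  shows "ramp_sum T (x + y) \<le> ramp_sum T x + ramp_sum T y"
proof -
  have "ramp_sum T (x + y) \<le> (\<Sum>i. min (x / T i) 1 + min (y / T i) 1)"
    unfolding ramp_sum_def
    using assms T_pos
    by (intro suminf_le[OF _ summable_ramp summable_add[OF summable_ramp summable_ramp]])
       (auto simp: min_def field_simps)
  also have "\<dots> = ramp_sum T x + ramp_sum T y"
    unfolding ramp_sum_def by (rule suminf_add[OF summable_ramp summable_ramp, symmetric])
  finally show ?thesis .
qed

lemma ramp_sum_concave: "concave_on {0..} (ramp_sum T)"
  unfolding concave_on_iff
proof (intro conjI ballI allI impI)
  fix x y u v :: real
  assume "0 \<le> u" "0 \<le> v" "u + v = 1"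
  then have "u * min (x / T i) 1 + v * min (y / T i) 1 \<le> min ((u *\<^sub>R x + v *\<^sub>R y) / T i) 1" for i
    using mult_left_mono[of "min (x / T i) 1" "x / T i" u] mult_left_mono[of "min (x / T i) 1" 1 u]
      mult_left_mono[of "min (y / T i) 1" "y / T i" v] mult_left_mono[of "min (y / T i) 1" 1 v]
    by (simp add: add_divide_distrib)
  then have "(\<Sum>i. u * min (x / T i) 1 + v * min (y / T i) 1) \<le> ramp_sum T (u *\<^sub>R x + v *\<^sub>R y)"
    unfolding ramp_sum_def
    by (intro suminf_le summable_add summable_mult summable_ramp)
  then show "u * ramp_sum T x + v * ramp_sum T y \<le> ramp_sum T (u *\<^sub>R x + v *\<^sub>R y)"
    unfolding ramp_sum_def
    by (simp add: suminf_add[OF summable_mult summable_mult, OF summable_ramp summable_ramp, symmetric]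
        suminf_mult[OF summable_ramp])
qed (rule convex_real_interval)

lemma ramp_tail_nonneg: "0 \<le> x \<Longrightarrow> 0 \<le> ramp_tail T x i"
  using T_pos[of i] by (simp add: ramp_tail_def)

lemma summable_ramp_tail:
  assumes "0 \<le> x"
  shows "summable (ramp_tail T x)"
proof (rule summable_comparison_test[OF _ summable_geometric_half])
  have "norm (ramp_tail T x i) \<le> \<bar>x - 0\<bar> * (1/2) ^ i" for i
    using ramp_diff_le[of x i 0] assms T_pos[of i] by (auto simp: ramp_tail_def min_def)
  then show "\<exists>N. \<forall>i\<ge>N. norm (ramp_tail T x i) \<le> \<bar>x - 0\<bar> * (1/2) ^ i"
    by blast
qed

lemma ramp_tail_partial_sum_le:
  assumes "0 \<le> x"
  shows "(\<Sum>i<n. ramp_tail T x i) \<le> (if x < T n then 2 - 2 * x / T n else 0)"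
proof (induction n)
  case 0
  then show ?case
    using T_pos[of 0] assms by (auto simp: field_simps)
next
  case (Suc n)
  have T_n: "0 < T n" "2 * T n \<le> T (Suc n)"
    using T_pos T_Suc by auto
  show ?case
  proof (cases "x < T n")
    case True
    have "2 * x / T (Suc n) \<le> x / T n"
      using T_n assms by (simp add: field_simps) (metis mult.commute mult_left_mono)
    then show ?thesis
      using Suc True T_n by (simp add: ramp_tail_def)
  next
    case False
    then have "(\<Sum>i<Suc n. ramp_tail T x i) \<le> 0"
      using Suc by (simp add: ramp_tail_def)
    moreover have "x < T (Suc n) \<Longrightarrow> 0 \<le> 2 - 2 * x / T (Suc n)"
      using T_pos[of "Suc n"] by (simp add: field_simps)
    ultimately show ?thesis
      by (simp del: sum.lessThan_Suc) linarith
  qed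
qed

lemma ramp_tail_sum_le:
  assumes "0 \<le> x"
  shows "suminf (ramp_tail T x) \<le> 2"
proof (rule suminf_le_const[OF summable_ramp_tail[OF assms]])
  fix n
  have "0 \<le> x / T n"
    using assms T_pos[of n] by simp
  then show "(\<Sum>i<n. ramp_tail T x i) \<le> 2"
    using ramp_tail_partial_sum_le[OF assms, of n] by (auto split: if_splits)
qed

lemma ramp_sum_stretch_le:
  assumes a: "1 \<le> a" and x: "0 \<le> x"
  shows "ramp_sum T (a * x) - ramp_sum T x \<le> 2 * (a - 1)"
proof -
  have "min (a * x / T i) 1 - min (x / T i) 1 \<le> (a - 1) * ramp_tail T x i" for i
  proof (cases "x < T i")
    case True
    then show ?thesis
      using T_pos[of i] by (simp add: ramp_tail_def min_def field_simps)
  next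
    case False
    then have "x / T i \<le> a * x / T i"
      using T_pos[of i] a x by (intro divide_right_mono) (auto simp: mult_le_cancel_right1)
    then show ?thesis
      using False T_pos[of i] by (simp add: ramp_tail_def)
  qed
  then have "ramp_sum T (a * x) - ramp_sum T x \<le> (\<Sum>i. (a - 1) * ramp_tail T x i)"
    unfolding ramp_sum_def suminf_diff[OF summable_ramp summable_ramp]
    by (intro suminf_le summable_diff summable_ramp summable_mult summable_ramp_tail x)
  also have "\<dots> \<le> (a - 1) * 2"
    using mult_left_mono[OF ramp_tail_sum_le[OF x], of "a - 1"] a
    by (simp add: suminf_mult[OF summable_ramp_tail[OF x]])
  finally show ?thesis
    by simp
qed

lemma ramp_sum_scale_bounded:
  assumes a: "0 < a" and x: "0 \<le> x"
  shows "\<bar>ramp_sum T (a * x) - ramp_sum T x\<bar> \<le> 2 * (a + 1 / a)"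
proof (cases "1 \<le> a")
  case True
  then have "ramp_sum T x \<le> ramp_sum T (a * x)"
    using x by (intro ramp_sum_mono) (auto simp: mult_le_cancel_right1)
  moreover have "2 * (a - 1) \<le> 2 * (a + 1 / a)"
    using a by (smt (verit) divide_pos_pos)
  ultimately show ?thesis
    using ramp_sum_stretch_le[OF True x] by linarith
next
  case False
  then have "ramp_sum T ((1 / a) * (a * x)) - ramp_sum T (a * x) \<le> 2 * (1 / a - 1)"
    using a x by (intro ramp_sum_stretch_le) auto
  moreover have "ramp_sum T (a * x) \<le> ramp_sum T x"
    using False a x by (intro ramp_sum_mono) (auto intro: mult_left_le_one_le)
  ultimately show ?thesis
    using a by (simp add: abs_if)
qed

lemma ramp_sum_T_ge: "real m + 1 \<le> ramp_sum T (T m)"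
proof -
  have "min (T m / T i) 1 = 1" if "i < Suc m" for i
    using T_mono[of i m] T_pos[of i] that by simp
  then have "real m + 1 = (\<Sum>i<Suc m. min (T m / T i) 1)"
    by simp
  also have "\<dots> \<le> ramp_sum T (T m)"
    unfolding ramp_sum_def
    by (intro sum_le_suminf summable_ramp) (use T_pos in \<open>auto simp: less_imp_le\<close>)
  finally show ?thesis .
qed

lemma ramp_sum_below_T_le:
  assumes N: "0 \<le> N" "N < T (Suc m)"
  shows "ramp_sum T N \<le> real m + 3"
proof -
  define head where "head i = (if i \<le> m then 1 else 0 :: real)" for i
  have "min (N / T i) 1 \<le> head i + ramp_tail T N i" for i
  proof (cases "i \<le> m")
    case False
    then have "N < T i"
      using N T_mono[of "Suc m" i] by auto
    then show ?thesis
      using False by (simp add: head_def ramp_tail_def)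
  qed (use ramp_tail_nonneg[OF N(1), of i] min.cobounded2[of "N / T i" 1] in \<open>simp add: head_def\<close>)
  moreover have head: "summable head"
    by (rule summable_finite[of "{..m}"]) (auto simp: head_def)
  ultimately have "ramp_sum T N \<le> (\<Sum>i. head i + ramp_tail T N i)"
    unfolding ramp_sum_def by (intro suminf_le summable_ramp summable_add summable_ramp_tail N(1))
  also have "\<dots> = suminf head + suminf (ramp_tail T N)"
    by (rule suminf_add[OF head summable_ramp_tail[OF N(1)], symmetric])
  also have "\<dots> \<le> real m + 3"
    using ramp_tail_sum_le[OF N(1)] suminf_finite[of "{..m}" head] by (simp add: head_def)
  finally show ?thesis .
qed

lemma ramp_sum_ratio_ge:
  assumes "T m \<le> c" "c \<le> N" "N < T (Suc m)"
  shows "1 / 3 \<le> ramp_sum T c / ramp_sum T N"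
proof -
  have "0 \<le> c"
    using assms(1) T_pos[of m] by linarith
  then have "real m + 1 \<le> ramp_sum T c"
    using ramp_sum_T_ge[of m] ramp_sum_mono[of "T m" c] assms(1) T_pos[of m] by linarith
  moreover have "0 < ramp_sum T N" "ramp_sum T N \<le> real m + 3"
    using assms T_pos[of m] by (auto intro: ramp_sum_pos ramp_sum_below_T_le)
  ultimately have "(real m + 1) / (real m + 3) \<le> ramp_sum T c / ramp_sum T N"
    by (intro frac_le) auto
  moreover have "1 / 3 \<le> (real m + 1) / (real m + 3)"
    by (simp add: field_simps)
  ultimately show ?thesis
    by linarith
qed

lemma ramp_sum_not_f_density_zero:
  assumes hit: "\<And>m. \<exists>n. T m \<le> real (card {k \<in> {1..n}. k \<in> K}) \<and> real n < T (Suc m)"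
  shows "\<not> f_density_zero (ramp_sum T) K"
proof
  let ?ratio = "\<lambda>n. ramp_sum T (real (card {k \<in> {1..n}. k \<in> K})) / ramp_sum T (real n)"
  assume "f_density_zero (ramp_sum T) K"
  then have "\<forall>\<^sub>F n in sequentially. ?ratio n < 1 / 3"
    unfolding f_density_zero_def by (rule order_tendstoD) simp
  then obtain m where m: "\<And>n. m \<le> n \<Longrightarrow> ?ratio n < 1 / 3"
    unfolding eventually_sequentially by blast
  obtain n where n: "T m \<le> real (card {k \<in> {1..n}. k \<in> K})" "real n < T (Suc m)"
    using hit by blast
  moreover have count_le: "real (card {k \<in> {1..n}. k \<in> K}) \<le> real n"
    using card_counting_le by simp
  ultimately have "1 / 3 \<le> ?ratio n"
    by (intro ramp_sum_ratio_ge)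
  moreover have "real m \<le> T m"
    using two_power_le_T[of m] of_nat_less_two_power[of m, where ?'a = real] by linarith
  then have "m \<le> n"
    using n(1) count_le by linarith
  ultimately show False
    using m by fastforce
qed

lemma unbounded_modulus_ramp_sum: "unbounded_modulus (ramp_sum T)"
  unfolding unbounded_modulus_def modulus_def
proof (intro conjI allI impI)
  show "mono_on {0..} (ramp_sum T)"
    by (rule mono_onI) (auto intro: ramp_sum_mono)
  show "continuous_on {0..} (ramp_sum T)"
    using ramp_sum_lipschitz
    by (intro lipschitz_on_continuous_on[of 2]) (auto simp: lipschitz_on_def dist_real_def)
  fix M :: real
  show "\<exists>x\<ge>0. M < ramp_sum T x"
    using ramp_sum_T_ge[of "nat \<lceil>M\<rceil>"] T_pos[of "nat \<lceil>M\<rceil>"]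
    by (intro exI[of _ "T (nat \<lceil>M\<rceil>)"]) linarith
qed (use ramp_sum_0 ramp_sum_pos ramp_sum_mono[of 0] ramp_sum_subadditive in \<open>auto simp: less_le\<close>)

lemma slowly_varying_ramp_sum: "slowly_varying (ramp_sum T)"
  by (rule slowly_varying_if_bounded_difference[OF unbounded_modulus_tendsto_at_top[OF unbounded_modulus_ramp_sum]])
     (use ramp_sum_scale_bounded in blast)

end

text \<open>Here g t is an index n at which the counted set has at least t elements in {1..n},
  so the next scale lies beyond such an n for the current one.\<close>

primrec scale_beyond :: "(real \<Rightarrow> nat) \<Rightarrow> nat \<Rightarrow> real" where
  "scale_beyond g 0 = 1"
| "scale_beyond g (Suc m) = 2 * max (scale_beyond g m) (real (g (scale_beyond g m)))"

lemma doubling_scale_scale_beyond: "doubling_scale (scale_beyond g)"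
  by unfold_locales auto

lemma infinite_imp_counting_unbounded:
  assumes "infinite (K :: nat set)"
  shows "\<exists>n. t \<le> real (card {k \<in> {1..n}. k \<in> K})"
proof -
  obtain S where S: "finite S" "card S = nat \<lceil>t\<rceil>" "S \<subseteq> K - {0}"
    using assms infinite_arbitrarily_large[of "K - {0}"] by auto
  then have "card S \<le> card {k \<in> {1..Max (insert 0 S)}. k \<in> K}"
    by (intro card_mono) auto
  then show ?thesis
    using S(2) by (intro exI[of _ "Max (insert 0 S)"]) linarith
qed

lemma infinite_imp_not_f_density_zero:
  assumes K: "infinite K"
  shows "\<exists>f. unbounded_modulus f \<and> concave_on {0..} f \<and> slowly_varying f \<and> \<not> f_density_zero f K"
proof -
  define g where "g t = (SOME n. t \<le> real (card {k \<in> {1..n}. k \<in> K}))" for t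
  have g: "t \<le> real (card {k \<in> {1..g t}. k \<in> K})" for t
    unfolding g_def by (rule someI_ex) (rule infinite_imp_counting_unbounded[OF K])
  interpret doubling_scale "scale_beyond g"
    by (rule doubling_scale_scale_beyond)
  have "\<not> f_density_zero (ramp_sum (scale_beyond g)) K"
  proof (rule ramp_sum_not_f_density_zero)
    fix m
    let ?n = "g (scale_beyond g m)"
    have "scale_beyond g m \<le> real (card {k \<in> {1..?n}. k \<in> K})"
      by (rule g)
    moreover have "real (card {k \<in> {1..?n}. k \<in> K}) \<le> real ?n"
      using card_counting_le by simp
    ultimately have "real ?n < scale_beyond g (Suc m)"
      using T_pos[of m] by simp
    with \<open>scale_beyond g m \<le> _\<close> show "\<exists>n. scale_beyond g m \<le> real (card {k \<in> {1..n}. k \<in> K})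
        \<and> real n < scale_beyond g (Suc m)"
      by blast
  qed
  then show ?thesis
    using unbounded_modulus_ramp_sum ramp_sum_concave slowly_varying_ramp_sum by blast
qed

lemma f_wijsman_stat_conv_imp_wijsman_conv:
  assumes "\<And>f. unbounded_modulus f \<Longrightarrow> concave_on {0..} f \<Longrightarrow> slowly_varying f
             \<Longrightarrow> f_wijsman_stat_conv f As A"
  shows "wijsman_conv As A"
  unfolding wijsman_conv_def
proof (rule ccontr)
  assume "\<not> (\<forall>x. (\<lambda>k. infdist x (As k)) \<longlonglongrightarrow> infdist x A)"
  then obtain x e where "0 < e" and "\<forall>N. \<exists>k\<ge>N. e \<le> \<bar>infdist x (As k) - infdist x A\<bar>"
    unfolding LIMSEQ_def dist_real_def by (auto simp: not_less)
  then have "infinite {k. e \<le> \<bar>infdist x (As k) - infdist x A\<bar>}"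
    unfolding infinite_nat_iff_unbounded_le by blast
  then obtain f where "unbounded_modulus f" "concave_on {0..} f" "slowly_varying f"
    and "\<not> f_density_zero f {k. e \<le> \<bar>infdist x (As k) - infdist x A\<bar>}"
    using infinite_imp_not_f_density_zero by blast
  with \<open>0 < e\<close> assms show False
    unfolding f_wijsman_stat_conv_def f_stat_conv_def by blast
qed

theorem theorem2p7:
  fixes As :: "nat \<Rightarrow> 'a::metric_space set" and A :: "'a set"
  assumes "\<And>k. As k \<in> CL" and "A \<in> CL"
  shows "(wijsman_conv As A \<longleftrightarrow>
            (\<forall>f. unbounded_modulus f \<longrightarrow> f_wijsman_stat_conv f As A))
       \<and> (wijsman_conv As A \<longleftrightarrow>
            (\<forall>f. unbounded_modulus f \<and> concave_on {0..} f \<and> slowly_varying f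
                 \<longrightarrow> f_wijsman_stat_conv f As A))"
  using wijsman_conv_imp_f_wijsman_stat_conv f_wijsman_stat_conv_imp_wijsman_conv by blast
end
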